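(* Let $\mathcal{C}$ be a PL-cograph and $P,Q,R$ distinct points with $e=\mathcal{C}(P,Q)\neq f=\mathcal{C}(P,R)$. Then $P$ is the unique point incident to both an edge of value $e$ and an edge of value $f$: if $P',Q',R'$ are points with $\mathcal{C}(P',Q')=e$ and $\mathcal{C}(P',R')=f$, then $P'=P$.
   Context: A cograph is a function $\mathcal{C}$ assigning to each unordered pair $\{P,Q\}$ of distinct elements of a point set a value $\mathcal{C}(P,Q)$ (an edge). A PL-cograph is a cograph satisfying: (1) for distinct points $P,Q,R$, if $\mathcal{C}(P,Q)=\mathcal{C}(Q,R)$ then $\mathcal{C}(P,Q)=\mathcal{C}(P,R)$; (2) for distinct points $P,Q,R,S$, if $\mathcal{C}(P,Q)=\mathcal{C}(R,S)$ then $\mathcal{C}(P,Q)=\mathcal{C}(P,R)=\mathcal{C}(P,S)=\mathcal{C}(Q,R)=\mathcal{C}(Q,S)$. *)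

theory Defs
  imports Main
begin

text \<open>A cograph on a point set S: a value C P Q for each unordered pair of distinct
points, modelled as a function symmetric on distinct points of S.\<close>
definition cograph :: "'a set \<Rightarrow> ('a \<Rightarrow> 'a \<Rightarrow> 'b) \<Rightarrow> bool" where
  "cograph S C \<longleftrightarrow> (\<forall>P\<in>S. \<forall>Q\<in>S. P \<noteq> Q \<longrightarrow> C P Q = C Q P)"

definition PL_cograph :: "'a set \<Rightarrow> ('a \<Rightarrow> 'a \<Rightarrow> 'b) \<Rightarrow> bool" where
  "PL_cograph S C \<longleftrightarrow> cograph S C
     \<and> (\<forall>P\<in>S. \<forall>Q\<in>S. \<forall>R\<in>S. distinct [P, Q, R] \<longrightarrow> C P Q = C Q R \<longrightarrow> C P Q = C P R)
     \<and> (\<forall>P\<in>S. \<forall>Q\<in>S. \<forall>R\<in>S. \<forall>T\<in>S. distinct [P, Q, R, T] \<longrightarrow> C P Q = C R T \<longrightarrow>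
          C P Q = C P R \<and> C P Q = C P T \<and> C P Q = C Q R \<and> C P Q = C Q T)"

end

theory Submission
  imports Defs
begin

text \<open>If some edge elsewhere in the cograph carries the value e = C P Q, then
every edge from P to a point P' on such an edge also has value e (by the two
PL axioms, case by case on how the edges overlap).  A point P' \<noteq> P lying on
edges of values e and f would thus force e = C P P' = f.\<close>

lemma PL_cograph_sym:
  assumes "PL_cograph S C" "X \<in> S" "Y \<in> S" "X \<noteq> Y"
  shows "C X Y = C Y X"
  using assms unfolding PL_cograph_def cograph_def by blast

lemma PL_cograph_path:
  assumes "PL_cograph S C" "X \<in> S" "Y \<in> S" "Z \<in> S" "distinct [X, Y, Z]"
    and "C X Y = C Y Z"
  shows "C X Y = C X Z"
  using assms unfolding PL_cograph_def by blast

lemma PL_cograph_disjoint: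
  assumes "PL_cograph S C" "X \<in> S" "Y \<in> S" "Z \<in> S" "T \<in> S" "distinct [X, Y, Z, T]"
    and "C X Y = C Z T"
  shows "C X Y = C X Z"
  using assms unfolding PL_cograph_def by blast

lemma PL_cograph_edge_to_same_value:
  assumes PL: "PL_cograph S C"
    and "P \<in> S" "Q \<in> S" "P \<noteq> Q"
    and "P' \<in> S" "Q' \<in> S" "P' \<noteq> Q'" "P' \<noteq> P"
    and eq: "C P' Q' = C P Q"
  shows "C P P' = C P Q"
proof -
  consider "Q' = P" | "P' = Q" | "Q' = Q" | "distinct [P, Q, P', Q']"
    using assms by auto
  then show ?thesis
  proof cases
    case 1
    then show ?thesis using eq PL_cograph_sym[OF PL] assms by metis
  next
    case 2
    then show ?thesis by simp
  next
    case 3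
    then have "C P Q = C Q P'"
      using eq PL_cograph_sym[OF PL] assms by metis
    then show ?thesis using PL_cograph_path[OF PL, of P Q P'] 3 assms by auto
  next
    case 4
    then show ?thesis using PL_cograph_disjoint[OF PL, of P Q P' Q'] eq assms by auto
  qed
qed

theorem mainTheorem20:
  fixes S :: "'a set" and C :: "'a \<Rightarrow> 'a \<Rightarrow> 'b"
  assumes "PL_cograph S C"
    and "P \<in> S" "Q \<in> S" "R \<in> S" "distinct [P, Q, R]"
    and "C P Q \<noteq> C P R"
    and "P' \<in> S" "Q' \<in> S" "R' \<in> S" "P' \<noteq> Q'" "P' \<noteq> R'"
    and "C P' Q' = C P Q" "C P' R' = C P R"
  shows "P' = P"
proof (rule ccontr)
  assume "P' \<noteq> P"
  then have "C P P' = C P Q" and "C P P' = C P R"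
    using PL_cograph_edge_to_same_value[of S C P Q P' Q']
      PL_cograph_edge_to_same_value[of S C P R P' R'] assms by auto
  then show False using assms by simp
qed

end
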